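(* Let $A\in\mathcal{C}^{n\times n}$ be a diagonalizable matrix with at most finite entries, and let $\mathbf v\in\mathcal{C}^n$ be an eigenvector of $A$ with at most finite entries, $A\mathbf v=\nu\mathbf v$, such that $\|\mathbf v\|_2[0]>0$. Let $(\mathbf u_k)_k\subset\mathcal{C}^n$ be vectors with at most finite entries such that each coordinate sequence $(\mathbf u_k^i)_k$ is regular and $\mathbf u_k\xrightarrow{wk}\mathbf v$ coordinatewise. Then $$\frac{\mathbf u_k^*A\mathbf u_k}{\|\mathbf u_k\|_2^2}\xrightarrow{wk}\nu,$$ where $\mathbf u_k^*=(\overline{\mathbf u_k^1},\dots,\overline{\mathbf u_k^n})$.
   Context: The Levi-Civita field $\mathcal{R}$ (resp. $\mathcal{C}$) is the set of functions $a:\mathbb Q\to\mathbb R$ (resp. $\mathbb C$) with left-finite support (for every $r\in\mathbb Q$ only finitely many $q<r$ with $a(q)\ne0$), written $a[q]:=a(q)$; addition is pointwise, multiplication is $(ab)[q]=\sum_{q_1+q_2=q}a[q_1]b[q_2]$; $\mathcal{R}$ is a real closed ordered field ($a\succ b$ iff $(a-b)[\lambda(a-b)]>0$) and $\mathcal{C}=\mathcal{R}(i)$ is algebraically closed. $\operatorname{supp}(a)=\{q:a[q]\ne0\}$, $\lambda(a)=\min\operatorname{supp}(a)$ ($\lambda(0)=+\infty$); $a$ is at most finite if $\lambda(a)\ge0$. For $z=a+ib\in\mathcal{C}$ ($a,b\in\mathcal{R}$), $\bar z=a-ib$ and $|z|=\sqrt{a^2+b^2}$. For $r\in\mathbb Q$,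 $\|a\|_r:=\sup_{q\le r}|a[q]|\in\mathbb R$. Weak convergence $a_n\xrightarrow{wk}a$: for every real $r>0$ there is $N_0$ with $\|a_n-a\|_{1/r}<r$ for all $n>N_0$. A sequence is regular if the union of supports of its terms is left-finite. $\|\mathbf x\|_2=\sqrt{|\mathbf x^1|^2+\dots+|\mathbf x^n|^2}$. *)

theory Defs
  imports Complex_Main
begin

definition left_finite :: "(rat \<Rightarrow> complex) \<Rightarrow> bool" where
  "left_finite a \<longleftrightarrow> (\<forall>r. finite {q. q < r \<and> a q \<noteq> 0})"

typedef lc = "{a :: rat \<Rightarrow> complex. left_finite a}"
  by (rule exI[of _ "\<lambda>_. 0"]) (simp add: left_finite_def)

definition coeff :: "lc \<Rightarrow> rat \<Rightarrow> complex" where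
  "coeff x q = Rep_lc x q"

instantiation lc :: "{zero, one, plus, uminus, minus, times, inverse}"
begin

definition zero_lc_def: "0 = Abs_lc (\<lambda>_. 0)"
definition one_lc_def: "1 = Abs_lc (\<lambda>q. if q = 0 then 1 else 0)"
definition plus_lc_def: "x + y = Abs_lc (\<lambda>q. Rep_lc x q + Rep_lc y q)"
definition uminus_lc_def: "- x = Abs_lc (\<lambda>q. - Rep_lc x q)"
definition minus_lc_def: "x - y = Abs_lc (\<lambda>q. Rep_lc x q - Rep_lc y q)"
text \<open>Cauchy product: (ab)[q] = sum over q1+q2=q of a[q1] b[q2]; the index set is
  finite because supports are left-finite.\<close>
definition times_lc_def: "x * y = Abs_lc (\<lambda>q.
   (\<Sum>q1\<in>{q1. Rep_lc x q1 \<noteq> 0 \<and> Rep_lc y (q - q1) \<noteq> 0}. Rep_lc x q1 * Rep_lc y (q - q1)))"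
definition inverse_lc_def: "inverse x = (if x = 0 then 0 else (THE y. x * y = (1::lc)))"

instance ..
end

definition lc_div :: "lc \<Rightarrow> lc \<Rightarrow> lc" where
  "lc_div x y = x * inverse y"

definition lc_cnj :: "lc \<Rightarrow> lc" where
  "lc_cnj x = Abs_lc (\<lambda>q. cnj (Rep_lc x q))"

definition lc_real :: "lc \<Rightarrow> bool" where
  "lc_real x \<longleftrightarrow> (\<forall>q. Im (coeff x q) = 0)"

definition lc_nonneg :: "lc \<Rightarrow> bool" where
  "lc_nonneg x \<longleftrightarrow> lc_real x \<and>
     (x = 0 \<or> (\<exists>q. coeff x q \<noteq> 0 \<and> (\<forall>p<q. coeff x p = 0) \<and> Re (coeff x q) > 0))"

definition lc_sqrt :: "lc \<Rightarrow> lc" where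
  "lc_sqrt x = (THE y. lc_nonneg y \<and> y * y = x)"

text \<open>At most finite: lambda(a) >= 0.\<close>
definition at_most_finite :: "lc \<Rightarrow> bool" where
  "at_most_finite x \<longleftrightarrow> (\<forall>q<0. coeff x q = 0)"

definition lc_sum :: "nat \<Rightarrow> (nat \<Rightarrow> lc) \<Rightarrow> lc" where
  "lc_sum n f = foldr (+) (map f [0..<n]) 0"

definition lc_abs :: "lc \<Rightarrow> lc" where
  "lc_abs z = lc_sqrt (z * lc_cnj z)"

text \<open>Euclidean norm of a vector in \<C>^n (vectors: nat => lc, indices < n).\<close>
definition lc_norm2 :: "nat \<Rightarrow> (nat \<Rightarrow> lc) \<Rightarrow> lc" where
  "lc_norm2 n x = lc_sqrt (lc_sum n (\<lambda>i. lc_abs (x i) * lc_abs (x i)))"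

text \<open>Seminorm ||a||_r = sup_{q <= r} |a[q]| (r real, so that 1/r is allowed).\<close>
definition lc_snorm :: "real \<Rightarrow> lc \<Rightarrow> real" where
  "lc_snorm r x = Sup {cmod (coeff x q) | q. of_rat q \<le> r}"

definition weak_conv :: "(nat \<Rightarrow> lc) \<Rightarrow> lc \<Rightarrow> bool" where
  "weak_conv s l \<longleftrightarrow>
     (\<forall>r::real. r > 0 \<longrightarrow> (\<exists>N0. \<forall>k>N0. lc_snorm (1 / r) (s k - l) < r))"

definition regular :: "(nat \<Rightarrow> lc) \<Rightarrow> bool" where
  "regular s \<longleftrightarrow> (\<forall>r. finite {q. q < r \<and> (\<exists>k. coeff (s k) q \<noteq> 0)})"

definition mat_mult :: "nat \<Rightarrow> (nat \<Rightarrow> nat \<Rightarrow> lc) \<Rightarrow> (nat \<Rightarrow> nat \<Rightarrow> lc) \<Rightarrow> nat \<Rightarrow> nat \<Rightarrow> lc" where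
  "mat_mult n A B = (\<lambda>i j. lc_sum n (\<lambda>k. A i k * B k j))"

definition mat_vec :: "nat \<Rightarrow> (nat \<Rightarrow> nat \<Rightarrow> lc) \<Rightarrow> (nat \<Rightarrow> lc) \<Rightarrow> nat \<Rightarrow> lc" where
  "mat_vec n A x = (\<lambda>i. lc_sum n (\<lambda>j. A i j * x j))"

definition mat_id :: "nat \<Rightarrow> nat \<Rightarrow> lc" where
  "mat_id = (\<lambda>i j. if i = j then 1 else 0)"

definition diagonalizable :: "nat \<Rightarrow> (nat \<Rightarrow> nat \<Rightarrow> lc) \<Rightarrow> bool" where
  "diagonalizable n A \<longleftrightarrow>
    (\<exists>P Q d. (\<forall>i<n. \<forall>j<n. mat_mult n P Q i j = mat_id i j)
           \<and> (\<forall>i<n. \<forall>j<n. mat_mult n Q P i j = mat_id i j)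
           \<and> (\<forall>i<n. \<forall>j<n. A i j = mat_mult n (mat_mult n P (\<lambda>a b. if a = b then d a else 0)) Q i j))"

definition quad_form :: "nat \<Rightarrow> (nat \<Rightarrow> nat \<Rightarrow> lc) \<Rightarrow> (nat \<Rightarrow> lc) \<Rightarrow> lc" where
  "quad_form n A u = lc_sum n (\<lambda>i. lc_cnj (u i) * mat_vec n A u i)"

end

theory Submission
  imports Defs
    "HOL-Library.Groups_Big_Fun"
    "HOL-Library.Set_Algebras"
    "HOL-Computational_Algebra.Formal_Power_Series"
begin

text \<open>Write \<open>N(x) = \<Sum>i. x\<^sub>i * cnj x\<^sub>i\<close> and \<open>Q(x) = x\<^sup>* A x\<close>; the square roots in the definition
  of the norm exist and are unique (binomial series), so \<open>\<parallel>x\<parallel>\<^sub>2\<^sup>2 = N(x)\<close>.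
  For regular sequences, weak convergence is the same as convergence of every coefficient, and
  sums, products and conjugates of regular, coefficientwise convergent sequences are again such.
  Hence \<open>Q(u\<^sub>k) \<rightarrow> Q(v) = \<nu> N(v)\<close> and \<open>N(u\<^sub>k) \<rightarrow> N(v)\<close>.
  Since \<open>N(v)\<close> is at most finite with nonzero constant term, and the supports of all \<open>N(u\<^sub>k)\<close> lie in one
  left-finite set, there is a single \<open>m > 0\<close> such that eventually all \<open>N(u\<^sub>k)\<close> and \<open>N(v)\<close> have the
  form \<open>c (1 + e)\<close> with \<open>e\<close> vanishing below \<open>m\<close>. Their inverses are then given by one geometric
  series, which again depends regularly and continuously on \<open>k\<close>, so
  \<open>Q(u\<^sub>k) / N(u\<^sub>k) \<rightarrow> \<nu> N(v) / N(v) = \<nu>\<close>.\<close>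

definition left_finite_set :: "rat set \<Rightarrow> bool" where
  "left_finite_set S \<longleftrightarrow> (\<forall>r. finite {q\<in>S. q < r})"

lemma left_finite_iff_set: "left_finite f \<longleftrightarrow> left_finite_set {q. f q \<noteq> 0}"
  unfolding left_finite_set_def left_finite_def by (simp add: conj_commute)

lemma left_finite_set_subset:
  assumes "left_finite_set T" "S \<subseteq> T" shows "left_finite_set S"
  unfolding left_finite_set_def
proof
  fix r
  have "{q\<in>S. q < r} \<subseteq> {q\<in>T. q < r}" using assms(2) by blast
  moreover have "finite {q\<in>T. q < r}" using assms(1) unfolding left_finite_set_def by blast
  ultimately show "finite {q\<in>S. q < r}" by (rule finite_subset)
qed

lemma left_finite_set_Un:
  assumes "left_finite_set S" "left_finite_set T" shows "left_finite_set (S \<union> T)"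
  unfolding left_finite_set_def
proof
  fix r
  have "{q\<in>S \<union> T. q < r} = {q\<in>S. q < r} \<union> {q\<in>T. q < r}" by blast
  then show "finite {q\<in>S \<union> T. q < r}" using assms unfolding left_finite_set_def by simp
qed

lemma left_finite_set_has_min:
  assumes "left_finite_set S" "S \<noteq> {}"
  shows "\<exists>l\<in>S. \<forall>q\<in>S. l \<le> q"
proof -
  obtain q0 where q0: "q0 \<in> S" using assms(2) by blast
  let ?F = "{q\<in>S. q < q0 + 1}"
  have fin: "finite ?F" using assms(1) unfolding left_finite_set_def by blast
  have "q0 \<in> ?F" using q0 by simp
  then have "Min ?F \<in> ?F" using fin by (intro Min_in) auto
  moreover have "Min ?F \<le> q" if "q \<in> S" for q
  proof (cases "q < q0 + 1")
    case True then show ?thesis using fin that by (intro Min_le) auto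
  next
    case False
    have "Min ?F \<le> q0" using fin q0 by (intro Min_le) auto
    then show ?thesis using False by simp
  qed
  ultimately show ?thesis by blast
qed

lemma left_finite_set_bdd_below: "left_finite_set S \<Longrightarrow> \<exists>b. \<forall>q\<in>S. b \<le> q"
  using left_finite_set_has_min by (cases "S = {}") auto

lemma left_finite_set_gap:
  assumes "left_finite_set S"
  shows "\<exists>m>0. \<forall>s. 0 < s \<and> s < m \<longrightarrow> s \<notin> S"
proof (cases "{s\<in>S. 0 < s} = {}")
  case True then show ?thesis by (intro exI[of _ 1]) auto
next
  case False
  have "left_finite_set {s\<in>S. 0 < s}" using assms by (rule left_finite_set_subset) auto
  then obtain l where "l \<in> S" "0 < l" "\<forall>s\<in>S. 0 < s \<longrightarrow> l \<le> s"
    using left_finite_set_has_min[OF _ False] by auto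
  then show ?thesis by (intro exI[of _ l]) auto
qed

lemma left_finite_set_plus:
  assumes S: "left_finite_set S" and T: "left_finite_set T"
  shows "left_finite_set (S + T)"
  unfolding left_finite_set_def
proof
  fix r
  obtain bS where bS: "\<forall>q\<in>S. bS \<le> q" using left_finite_set_bdd_below[OF S] by blast
  obtain bT where bT: "\<forall>q\<in>T. bT \<le> q" using left_finite_set_bdd_below[OF T] by blast
  let ?P = "{a\<in>S. a < r - bT} \<times> {b\<in>T. b < r - bS}"
  have "{q\<in>S + T. q < r} \<subseteq> (\<lambda>(a, b). a + b) ` ?P"
  proof
    fix q assume "q \<in> {q\<in>S + T. q < r}"
    then obtain a b where "a \<in> S" "b \<in> T" "q = a + b" "q < r" by (auto elim: set_plus_elim)
    moreover have "bS \<le> a" "bT \<le> b" using bS bT calculation by auto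
    ultimately show "q \<in> (\<lambda>(a, b). a + b) ` ?P" by (intro image_eqI[of _ _ "(a, b)"]) auto
  qed
  moreover have "finite ?P" using S T unfolding left_finite_set_def by blast
  ultimately show "finite {q\<in>S + T. q < r}" by (meson finite_imageI finite_subset)
qed

section \<open>The ring structure of the Levi-Civita field\<close>

definition lc_supp :: "lc \<Rightarrow> rat set" where
  "lc_supp x = {q. coeff x q \<noteq> 0}"

lemma left_finite_coeff: "left_finite (coeff x)"
  unfolding coeff_def using Rep_lc by simp

lemma left_finite_set_supp: "left_finite_set (lc_supp x)"
  using left_finite_coeff[of x] unfolding left_finite_iff_set lc_supp_def .

lemma coeff_Abs_lc: "left_finite f \<Longrightarrow> coeff (Abs_lc f) = f"
  unfolding coeff_def by (simp add: Abs_lc_inverse)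

lemma lc_eqI: "(\<And>q. coeff x q = coeff y q) \<Longrightarrow> x = y"
  unfolding coeff_def by (metis Rep_lc_inject ext)

lemma left_finite_bdd_below:
  assumes "left_finite f" shows "\<exists>b. \<forall>q<b. f q = 0"
proof -
  obtain b where "\<forall>q\<in>{q. f q \<noteq> 0}. b \<le> q"
    using assms left_finite_set_bdd_below unfolding left_finite_iff_set by blast
  then have "\<forall>q<b. f q = 0" by force
  then show ?thesis ..
qed

lemma finite_convolution_support:
  assumes f: "left_finite f" and g: "left_finite g"
  shows "finite {p. f p * g (q - p) \<noteq> 0}"
proof -
  obtain b where b: "\<forall>p<b. g p = 0" using left_finite_bdd_below[OF g] by blast
  have "{p. f p * g (q - p) \<noteq> 0} \<subseteq> {p. p < q - b + 1 \<and> f p \<noteq> 0}"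
  proof
    fix p assume "p \<in> {p. f p * g (q - p) \<noteq> 0}"
    then have "f p \<noteq> 0" "\<not> q - p < b" using b by auto
    then show "p \<in> {p. p < q - b + 1 \<and> f p \<noteq> 0}" by simp
  qed
  moreover have "finite {p. p < q - b + 1 \<and> f p \<noteq> 0}" using f unfolding left_finite_def by blast
  ultimately show ?thesis by (rule finite_subset)
qed

lemma Sum_any_nonzeroE:
  assumes "Sum_any g \<noteq> (0::'b::comm_monoid_add)" obtains a where "g a \<noteq> 0"
proof -
  from assms have "g \<noteq> (\<lambda>_. 0)" by (rule contrapos_nn) simp
  then show ?thesis using that by (meson ext)
qed

lemma left_finite_convolution:
  assumes f: "left_finite f" and g: "left_finite g"
  shows "left_finite (\<lambda>q. Sum_any (\<lambda>p. f p * g (q - p)))"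
  unfolding left_finite_iff_set
proof (rule left_finite_set_subset)
  show "left_finite_set ({q. f q \<noteq> 0} + {q. g q \<noteq> 0})"
    using f g unfolding left_finite_iff_set by (rule left_finite_set_plus)
  show "{q. Sum_any (\<lambda>p. f p * g (q - p)) \<noteq> 0} \<subseteq> {q. f q \<noteq> 0} + {q. g q \<noteq> 0}"
  proof
    fix q assume "q \<in> {q. Sum_any (\<lambda>p. f p * g (q - p)) \<noteq> 0}"
    then have "Sum_any (\<lambda>p. f p * g (q - p)) \<noteq> 0" by simp
    then obtain p where "f p * g (q - p) \<noteq> 0" by (rule Sum_any_nonzeroE)
    then have "f p \<noteq> 0" "g (q - p) \<noteq> 0" by simp_all
    then have "p + (q - p) \<in> {q. f q \<noteq> 0} + {q. g q \<noteq> 0}" by (intro set_plus_intro) simp_all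
    then show "q \<in> {q. f q \<noteq> 0} + {q. g q \<noteq> 0}" by simp
  qed
qed

lemma coeff_times: "coeff (x * y) q = Sum_any (\<lambda>p. coeff x p * coeff y (q - p))"
proof -
  define h where "h = (\<lambda>q. Sum_any (\<lambda>p. coeff x p * coeff y (q - p)))"
  have "{p. coeff x p \<noteq> 0 \<and> coeff y (q - p) \<noteq> 0} = {p. coeff x p * coeff y (q - p) \<noteq> 0}" for q
    by auto
  then have "(\<lambda>q. \<Sum>p\<in>{p. coeff x p \<noteq> 0 \<and> coeff y (q - p) \<noteq> 0}. coeff x p * coeff y (q - p)) = h"
    unfolding h_def by (simp only: Sum_any.expand_set)
  then have "x * y = Abs_lc h" unfolding times_lc_def coeff_def by (rule arg_cong)
  moreover have "left_finite h"
    unfolding h_def by (rule left_finite_convolution[OF left_finite_coeff left_finite_coeff])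
  ultimately show ?thesis by (simp add: coeff_Abs_lc h_def)
qed

lemma finite_coeff_product: "finite {p. coeff x p * coeff y (q - p) \<noteq> 0}"
  by (rule finite_convolution_support[OF left_finite_coeff left_finite_coeff])

lemma left_finite_const: "left_finite (\<lambda>q. if q = 0 then c else 0)"
  unfolding left_finite_iff_set by (rule left_finite_set_subset[of "{0}"]) (auto simp: left_finite_set_def)

lemma coeff_zero [simp]: "coeff 0 q = 0"
  unfolding zero_lc_def using left_finite_const[of 0] by (simp add: coeff_Abs_lc)

lemma coeff_one: "coeff 1 q = (if q = 0 then 1 else 0)"
  unfolding one_lc_def by (simp add: coeff_Abs_lc left_finite_const)

lemma coeff_add [simp]: "coeff (x + y) q = coeff x q + coeff y q"
proof -
  have "{q. coeff x q + coeff y q \<noteq> 0} \<subseteq> lc_supp x \<union> lc_supp y"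
    unfolding lc_supp_def by auto
  then have "left_finite (\<lambda>q. coeff x q + coeff y q)" unfolding left_finite_iff_set
    by (rule left_finite_set_subset[OF left_finite_set_Un[OF left_finite_set_supp left_finite_set_supp]])
  then show ?thesis unfolding plus_lc_def coeff_def[symmetric] by (simp add: coeff_Abs_lc)
qed

lemma coeff_diff [simp]: "coeff (x - y) q = coeff x q - coeff y q"
proof -
  have "{q. coeff x q - coeff y q \<noteq> 0} \<subseteq> lc_supp x \<union> lc_supp y"
    unfolding lc_supp_def by auto
  then have "left_finite (\<lambda>q. coeff x q - coeff y q)" unfolding left_finite_iff_set
    by (rule left_finite_set_subset[OF left_finite_set_Un[OF left_finite_set_supp left_finite_set_supp]])
  then show ?thesis unfolding minus_lc_def coeff_def[symmetric] by (simp add: coeff_Abs_lc)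
qed

lemma coeff_uminus [simp]: "coeff (- x) q = - coeff x q"
  using left_finite_coeff[of x] unfolding uminus_lc_def coeff_def[symmetric]
  by (simp add: coeff_Abs_lc left_finite_iff_set)

lemma coeff_lc_cnj [simp]: "coeff (lc_cnj x) q = cnj (coeff x q)"
  using left_finite_coeff[of x] unfolding lc_cnj_def coeff_def[symmetric]
  by (simp add: coeff_Abs_lc left_finite_iff_set)

lemma lc_mult_commute: "x * y = y * (x::lc)"
proof (rule lc_eqI)
  fix q
  have "bij (\<lambda>p::rat. q - p)" by (rule o_bij[of "\<lambda>p. q - p"]) (auto simp: fun_eq_iff)
  then have "Sum_any (\<lambda>p. coeff x p * coeff y (q - p)) = Sum_any (\<lambda>p. coeff y p * coeff x (q - p))"
    by (rule Sum_any.reindex_cong) (auto simp: fun_eq_iff mult.commute)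
  then show "coeff (x * y) q = coeff (y * x) q" by (simp add: coeff_times)
qed

lemma lc_distrib_right: "(x + y) * z = x * z + y * (z::lc)"
proof (rule lc_eqI)
  fix q
  have "Sum_any (\<lambda>p. (coeff x p + coeff y p) * coeff z (q - p)) =
     Sum_any (\<lambda>p. coeff x p * coeff z (q - p)) + Sum_any (\<lambda>p. coeff y p * coeff z (q - p))"
    unfolding distrib_right by (rule Sum_any.distrib) (rule finite_coeff_product)+
  then show "coeff ((x + y) * z) q = coeff (x * z + y * z) q" by (simp add: coeff_times)
qed

lemma lc_one_mult: "1 * x = (x::lc)"
proof (rule lc_eqI)
  fix q
  have "Sum_any (\<lambda>p. coeff 1 p * coeff x (q - p)) = Sum_any (\<lambda>p. if p = 0 then coeff x (q - p) else 0)"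
    by (rule Sum_any.cong) (simp add: coeff_one)
  then show "coeff (1 * x) q = coeff x q" by (simp add: coeff_times Sum_any.delta)
qed

lemma lc_mult_assoc: "(x * y) * z = x * (y * (z::lc))"
proof (rule lc_eqI)
  fix q
  let ?X = "coeff x" and ?Y = "coeff y" and ?Z = "coeff z"
  obtain by' where by': "\<forall>p<by'. ?Y p = 0" using left_finite_bdd_below[OF left_finite_coeff] by blast
  obtain bz where bz: "\<forall>p<bz. ?Z p = 0" using left_finite_bdd_below[OF left_finite_coeff] by blast
  define g where "g = (\<lambda>p a. ?X a * ?Y (p - a) * ?Z (q - p))"
  have "coeff ((x * y) * z) q = Sum_any (\<lambda>p. Sum_any (\<lambda>a. ?X a * ?Y (p - a)) * ?Z (q - p))"
    by (simp add: coeff_times)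
  also have "\<dots> = Sum_any (\<lambda>p. Sum_any (g p))"
    unfolding g_def by (subst Sum_any_left_distrib[OF finite_coeff_product]) (rule refl)
  also have "\<dots> = Sum_any (\<lambda>a. Sum_any (\<lambda>p. g p a))"
  proof (rule Sum_any.swap)
    let ?A = "{p \<in> lc_supp x + lc_supp y. p < q - bz + 1}"
    let ?B = "{a \<in> lc_supp x. a < q - by' - bz + 1}"
    show "finite (?A \<times> ?B)"
      using left_finite_set_plus[OF left_finite_set_supp left_finite_set_supp, of x y]
        left_finite_set_supp[of x] unfolding left_finite_set_def by blast
    show "{p. \<exists>a. g p a \<noteq> 0} \<times> {a. \<exists>p. g p a \<noteq> 0} \<subseteq> ?A \<times> ?B"
    proof clarify
      fix p a b p' assume gb: "g p b \<noteq> 0" and gp: "g p' a \<noteq> 0"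
      from gb have 1: "?X b \<noteq> 0" "?Y (p - b) \<noteq> 0" "?Z (q - p) \<noteq> 0" unfolding g_def by auto
      from gp have 2: "?X a \<noteq> 0" "?Y (p' - a) \<noteq> 0" "?Z (q - p') \<noteq> 0" unfolding g_def by auto
      have "p \<in> lc_supp x + lc_supp y"
        using 1 set_plus_intro[of b "lc_supp x" "p - b" "lc_supp y"] unfolding lc_supp_def by simp
      moreover have "\<not> q - p < bz" "\<not> q - p' < bz" "\<not> p' - a < by'" using 1 2 bz by' by blast+
      ultimately show "p \<in> ?A \<and> a \<in> ?B" using 2 unfolding lc_supp_def by auto
    qed
  qed
  also have "\<dots> = Sum_any (\<lambda>a. ?X a * Sum_any (\<lambda>b. ?Y b * ?Z (q - a - b)))"
  proof (rule Sum_any.cong)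
    fix a
    have "bij (\<lambda>b::rat. b + a)" by (rule o_bij[of "\<lambda>b. b - a"]) (auto simp: fun_eq_iff)
    then have "Sum_any (\<lambda>p. g p a) = Sum_any (\<lambda>b. ?X a * (?Y b * ?Z (q - a - b)))"
      by (rule Sum_any.reindex_cong) (auto simp: fun_eq_iff g_def algebra_simps)
    then show "Sum_any (\<lambda>p. g p a) = ?X a * Sum_any (\<lambda>b. ?Y b * ?Z (q - a - b))"
      by (simp add: Sum_any_right_distrib[OF finite_coeff_product])
  qed
  also have "\<dots> = coeff (x * (y * z)) q" by (simp add: coeff_times)
  finally show "coeff ((x * y) * z) q = coeff (x * (y * z)) q" .
qed

instance lc :: comm_ring_1
proof
  fix a b c :: lc
  show "a * b * c = a * (b * c)" by (rule lc_mult_assoc)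
  show "a * b = b * a" by (rule lc_mult_commute)
  show "1 * a = a" by (rule lc_one_mult)
  show "a + b + c = a + (b + c)" by (rule lc_eqI) (simp add: add.assoc)
  show "a + b = b + a" by (rule lc_eqI) (simp add: add.commute)
  show "0 + a = a" by (rule lc_eqI) simp
  show "- a + a = 0" by (rule lc_eqI) simp
  show "a - b = a + - b" by (rule lc_eqI) simp
  show "(a + b) * c = a * c + b * c" by (rule lc_distrib_right)
  show "(0::lc) \<noteq> 1" using coeff_one[of 0] coeff_zero[of 0] by force
qed

lemma coeff_sum: "coeff (\<Sum>i\<in>I. f i) q = (\<Sum>i\<in>I. coeff (f i) q)"
  by (induction I rule: infinite_finite_induct) auto

lemma lc_sum_eq_sum: "lc_sum n f = (\<Sum>i<n. f i)"
proof -
  have "foldr (+) (map f [m..<m + k]) 0 = (\<Sum>i\<in>{m..<m + k}. f i)" for m k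
  proof (induction k arbitrary: m)
    case (Suc k)
    have "[m..<m + Suc k] = m # [Suc m..<Suc m + k]" by (simp add: upt_rec)
    moreover have "{m..<m + Suc k} = insert m {Suc m..<Suc m + k}" by auto
    ultimately show ?case using Suc[of "Suc m"] by simp
  qed simp
  from this[of 0 n] show ?thesis unfolding lc_sum_def by (simp add: atLeast0LessThan)
qed


definition lc_const :: "complex \<Rightarrow> lc" where
  "lc_const c = Abs_lc (\<lambda>q. if q = 0 then c else 0)"

lemma coeff_lc_const: "coeff (lc_const c) q = (if q = 0 then c else 0)"
  unfolding lc_const_def by (simp add: coeff_Abs_lc left_finite_const)

lemma coeff_lc_const_mult [simp]: "coeff (lc_const c * x) q = c * coeff x q"
proof -
  have "Sum_any (\<lambda>p. coeff (lc_const c) p * coeff x (q - p)) = Sum_any (\<lambda>p. if p = 0 then c * coeff x (q - p) else 0)"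
    by (rule Sum_any.cong) (simp add: coeff_lc_const)
  then show ?thesis by (simp add: coeff_times)
qed

lemma lc_const_mult: "lc_const (a * b) = lc_const a * lc_const b"
  by (rule lc_eqI) (simp add: coeff_lc_const)

lemma lc_const_zero [simp]: "lc_const 0 = 0"
  by (rule lc_eqI) (simp add: coeff_lc_const)

lemma lc_const_one [simp]: "lc_const 1 = 1"
  by (rule lc_eqI) (simp add: coeff_lc_const coeff_one)

lemma lc_const_add: "lc_const (a + b) = lc_const a + lc_const b"
  by (rule lc_eqI) (simp add: coeff_lc_const)

lemma lc_const_uminus: "lc_const (- a) = - lc_const a"
  by (rule lc_eqI) (simp add: coeff_lc_const)

lemma lc_const_power: "lc_const (a ^ n) = lc_const a ^ n"
  by (induction n) (simp_all add: lc_const_mult)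

lemma lc_const_sum: "lc_const (\<Sum>i\<in>I. f i) = (\<Sum>i\<in>I. lc_const (f i))"
  by (induction I rule: infinite_finite_induct) (simp_all add: lc_const_add)

lemma lc_cnj_mult: "lc_cnj (x * y) = lc_cnj x * lc_cnj y"
proof (rule lc_eqI)
  fix q
  have "cnj (Sum_any g) = Sum_any (\<lambda>a. cnj (g a))" for g :: "rat \<Rightarrow> complex"
    unfolding Sum_any.expand_set by (simp add: cnj_sum)
  then show "coeff (lc_cnj (x * y)) q = coeff (lc_cnj x * lc_cnj y) q" by (simp add: coeff_times)
qed

lemma lc_cnj_add: "lc_cnj (x + y) = lc_cnj x + lc_cnj y"
  by (rule lc_eqI) simp

lemma lc_cnj_diff: "lc_cnj (x - y) = lc_cnj x - lc_cnj y"
  by (rule lc_eqI) simp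

lemma lc_cnj_zero [simp]: "lc_cnj 0 = 0"
  by (rule lc_eqI) simp

lemma lc_cnj_one [simp]: "lc_cnj 1 = 1"
  by (rule lc_eqI) (simp add: coeff_one)

lemma lc_cnj_cnj [simp]: "lc_cnj (lc_cnj x) = x"
  by (rule lc_eqI) simp

lemma lc_cnj_power: "lc_cnj (x ^ n) = lc_cnj x ^ n"
  by (induction n) (simp_all add: lc_cnj_mult)

lemma lc_cnj_const: "lc_cnj (lc_const c) = lc_const (cnj c)"
  by (rule lc_eqI) (simp add: coeff_lc_const)

lemma lc_real_iff_cnj: "lc_real x \<longleftrightarrow> lc_cnj x = x"
proof
  assume "lc_real x"
  then show "lc_cnj x = x" unfolding lc_real_def by (intro lc_eqI) (simp add: complex_eq_iff)
next
  assume "lc_cnj x = x"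
  then have "cnj (coeff x q) = coeff x q" for q by (metis coeff_lc_cnj)
  then show "lc_real x" unfolding lc_real_def by (simp add: complex_eq_iff)
qed

definition lc_shift :: "rat \<Rightarrow> lc \<Rightarrow> lc" where
  "lc_shift a x = Abs_lc (\<lambda>q. coeff x (q - a))"

lemma coeff_lc_shift [simp]: "coeff (lc_shift a x) q = coeff x (q - a)"
proof -
  have "{q. coeff x (q - a) \<noteq> 0} = (\<lambda>p. p + a) ` lc_supp x"
    unfolding lc_supp_def by (auto simp: image_iff intro!: exI[of _ "_ - a"])
  moreover have "left_finite_set ((\<lambda>p. p + a) ` lc_supp x)"
    unfolding left_finite_set_def
  proof
    fix r
    have "{q\<in>(\<lambda>p. p + a) ` lc_supp x. q < r} = (\<lambda>p. p + a) ` {p\<in>lc_supp x. p < r - a}"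
      by (auto simp: algebra_simps)
    then show "finite {q\<in>(\<lambda>p. p + a) ` lc_supp x. q < r}"
      using left_finite_set_supp[of x] unfolding left_finite_set_def by simp
  qed
  ultimately have "left_finite (\<lambda>q. coeff x (q - a))" unfolding left_finite_iff_set by simp
  then show ?thesis unfolding lc_shift_def by (simp add: coeff_Abs_lc)
qed

lemma lc_shift_mult: "lc_shift a x * lc_shift b y = lc_shift (a + b) (x * y)"
proof (rule lc_eqI)
  fix q
  have "bij (\<lambda>d::rat. d + a)" by (rule o_bij[of "\<lambda>d. d - a"]) (auto simp: fun_eq_iff)
  then have "Sum_any (\<lambda>c. coeff x (c - a) * coeff y (q - c - b))
      = Sum_any (\<lambda>d. coeff x d * coeff y (q - (a + b) - d))"
    by (rule Sum_any.reindex_cong) (auto simp: fun_eq_iff algebra_simps)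
  then show "coeff (lc_shift a x * lc_shift b y) q = coeff (lc_shift (a + b) (x * y)) q"
    by (simp add: coeff_times)
qed

lemma lc_shift_shift: "lc_shift a (lc_shift b x) = lc_shift (a + b) x"
  by (rule lc_eqI) (simp add: algebra_simps)

lemma lc_shift_0 [simp]: "lc_shift 0 x = x"
  by (rule lc_eqI) simp

lemma lc_cnj_shift: "lc_cnj (lc_shift a x) = lc_shift a (lc_cnj x)"
  by (rule lc_eqI) simp

definition vanishes_below :: "lc \<Rightarrow> rat \<Rightarrow> bool" where
  "vanishes_below x b \<longleftrightarrow> (\<forall>q<b. coeff x q = 0)"

lemma at_most_finite_iff_vanishes_below: "at_most_finite x \<longleftrightarrow> vanishes_below x 0"
  unfolding at_most_finite_def vanishes_below_def ..

lemma vanishes_below_mono: "vanishes_below x b \<Longrightarrow> a \<le> b \<Longrightarrow> vanishes_below x a"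
  unfolding vanishes_below_def by simp

lemma vanishes_below_add: "vanishes_below x a \<Longrightarrow> vanishes_below y a \<Longrightarrow> vanishes_below (x + y) a"
  unfolding vanishes_below_def by simp

lemma vanishes_below_sum: "(\<And>i. i \<in> I \<Longrightarrow> vanishes_below (f i) a) \<Longrightarrow> vanishes_below (\<Sum>i\<in>I. f i) a"
  unfolding vanishes_below_def by (simp add: coeff_sum)

lemma vanishes_below_const_mult: "vanishes_below x a \<Longrightarrow> vanishes_below (lc_const c * x) a"
  unfolding vanishes_below_def by simp

lemma vanishes_below_cnj: "vanishes_below x a \<Longrightarrow> vanishes_below (lc_cnj x) a"
  unfolding vanishes_below_def by simp

lemma vanishes_below_one: "vanishes_below 1 0"
  unfolding vanishes_below_def by (simp add: coeff_one)

lemma vanishes_below_mult: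
  assumes x: "vanishes_below x a" and y: "vanishes_below y b"
  shows "vanishes_below (x * y) (a + b)"
  unfolding vanishes_below_def
proof (intro allI impI)
  fix q assume "q < a + b"
  then have "coeff x p * coeff y (q - p) = 0" for p
    using x y unfolding vanishes_below_def by (cases "p < a") auto
  then have "Sum_any (\<lambda>p. coeff x p * coeff y (q - p)) = Sum_any (\<lambda>_::rat. 0)"
    by (rule Sum_any.cong)
  then show "coeff (x * y) q = 0" by (simp add: coeff_times)
qed

lemma vanishes_below_power: "vanishes_below e m \<Longrightarrow> vanishes_below (e ^ j) (of_nat j * m)"
proof (induction j)
  case 0 then show ?case by (simp add: vanishes_below_one)
next
  case (Suc j)
  then have "vanishes_below (e * e ^ j) (m + of_nat j * m)" by (intro vanishes_below_mult)
  then show ?case by (simp add: algebra_simps)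
qed

lemma coeff_mult_lowest:
  assumes "vanishes_below x a" "vanishes_below y b"
  shows "coeff (x * y) (a + b) = coeff x a * coeff y b"
proof -
  have "coeff x p * coeff y (a + b - p) = (if p = a then coeff x a * coeff y b else 0)" for p
    using assms unfolding vanishes_below_def by (cases p a rule: linorder_cases) auto
  then show ?thesis by (simp add: coeff_times)
qed

lemma coeff_mult_eq_if_agree:
  assumes "vanishes_below a 0" and "\<forall>s\<le>t. coeff y s = coeff y' s"
  shows "coeff (a * y) t = coeff (a * y') t"
proof -
  have "coeff a p * coeff y (t - p) = coeff a p * coeff y' (t - p)" for p
    using assms unfolding vanishes_below_def by (cases "p < 0") auto
  then show ?thesis unfolding coeff_times by (rule Sum_any.cong)
qed

lemma lowest_coeff_exists:
  assumes "x \<noteq> 0" shows "\<exists>l. coeff x l \<noteq> 0 \<and> vanishes_below x l"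
proof -
  have "lc_supp x \<noteq> {}" using assms lc_eqI[of x 0] unfolding lc_supp_def by auto
  then obtain l where "l \<in> lc_supp x" "\<forall>q\<in>lc_supp x. l \<le> q"
    using left_finite_set_has_min[OF left_finite_set_supp] by blast
  then show ?thesis unfolding lc_supp_def vanishes_below_def by (auto simp: not_le[symmetric])
qed

lemma lowest_coeff_unique:
  "coeff x a \<noteq> 0 \<Longrightarrow> vanishes_below x a \<Longrightarrow> coeff x b \<noteq> 0 \<Longrightarrow> vanishes_below x b \<Longrightarrow> a = b"
  unfolding vanishes_below_def by (meson linorder_neqE)

instance lc :: idom
proof
  fix a b :: lc
  assume "a \<noteq> 0" "b \<noteq> 0"
  then obtain la lb where "coeff a la \<noteq> 0" "vanishes_below a la" "coeff b lb \<noteq> 0" "vanishes_below b lb"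
    using lowest_coeff_exists by blast
  then have "coeff (a * b) (la + lb) \<noteq> 0" by (simp add: coeff_mult_lowest)
  then show "a * b \<noteq> 0" by auto
qed

lemma vanishes_below_of_square:
  assumes "vanishes_below (y * y) 0" shows "vanishes_below y 0"
proof (cases "y = 0")
  case False
  then obtain l where l: "coeff y l \<noteq> 0" "vanishes_below y l" using lowest_coeff_exists by blast
  have "\<not> l < 0"
  proof
    assume "l < 0"
    then have "coeff (y * y) (l + l) = 0" using assms unfolding vanishes_below_def by simp
    then show False using l coeff_mult_lowest[OF l(2) l(2)] by simp
  qed
  then show ?thesis using l(2) by (simp add: vanishes_below_mono)
qed (simp add: vanishes_below_def)


lemma regular_iff_left_finite_set: "regular s \<longleftrightarrow> left_finite_set (\<Union>k. lc_supp (s k))"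
  unfolding regular_def left_finite_set_def lc_supp_def by (simp add: conj_commute)

lemma regular_const: "regular (\<lambda>k. c)"
  unfolding regular_iff_left_finite_set by (simp add: left_finite_set_supp)

lemma regular_subset:
  "regular s \<Longrightarrow> (\<Union>k. lc_supp (t k)) \<subseteq> (\<Union>k. lc_supp (s k)) \<Longrightarrow> regular t"
  unfolding regular_iff_left_finite_set by (rule left_finite_set_subset)

lemma regular_add: "regular a \<Longrightarrow> regular b \<Longrightarrow> regular (\<lambda>k. a k + b k)"
  unfolding regular_iff_left_finite_set
  by (erule left_finite_set_subset[OF left_finite_set_Un]) (auto simp: lc_supp_def)

lemma regular_diff: "regular a \<Longrightarrow> regular b \<Longrightarrow> regular (\<lambda>k. a k - b k)"
  unfolding regular_iff_left_finite_set
  by (erule left_finite_set_subset[OF left_finite_set_Un]) (auto simp: lc_supp_def)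

lemma regular_cnj: "regular a \<Longrightarrow> regular (\<lambda>k. lc_cnj (a k))"
  unfolding regular_iff_left_finite_set lc_supp_def by simp

lemma regular_sum:
  "finite I \<Longrightarrow> (\<And>i. i \<in> I \<Longrightarrow> regular (f i)) \<Longrightarrow> regular (\<lambda>k. \<Sum>i\<in>I. f i k)"
  by (induction I rule: finite_induct) (simp_all add: regular_const regular_add)

lemma regular_mult:
  assumes a: "regular a" and b: "regular b" shows "regular (\<lambda>k. a k * b k)"
  unfolding regular_iff_left_finite_set
proof (rule left_finite_set_subset)
  show "left_finite_set ((\<Union>k. lc_supp (a k)) + (\<Union>k. lc_supp (b k)))"
    using a b unfolding regular_iff_left_finite_set by (rule left_finite_set_plus)
  show "(\<Union>k. lc_supp (a k * b k)) \<subseteq> (\<Union>k. lc_supp (a k)) + (\<Union>k. lc_supp (b k))"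
  proof
    fix q assume "q \<in> (\<Union>k. lc_supp (a k * b k))"
    then obtain k where "Sum_any (\<lambda>p. coeff (a k) p * coeff (b k) (q - p)) \<noteq> 0"
      unfolding lc_supp_def by (auto simp: coeff_times)
    then obtain p where "coeff (a k) p * coeff (b k) (q - p) \<noteq> 0" by (rule Sum_any_nonzeroE)
    then have "p + (q - p) \<in> (\<Union>k. lc_supp (a k)) + (\<Union>k. lc_supp (b k))"
      unfolding lc_supp_def by (intro set_plus_intro) auto
    then show "q \<in> (\<Union>k. lc_supp (a k)) + (\<Union>k. lc_supp (b k))" by simp
  qed
qed

lemma regular_power: "regular e \<Longrightarrow> regular (\<lambda>k. e k ^ j)"
  by (induction j) (simp_all add: regular_const regular_mult)

lemma regular_lc_const_seq: "regular (\<lambda>k. lc_const (g k))"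
  by (rule regular_subset[OF regular_const[of 1]]) (auto simp: lc_supp_def coeff_lc_const coeff_one)

lemma regular_eventually_eq:
  assumes "regular s" "\<And>k. k \<ge> N \<Longrightarrow> t k = s k" shows "regular t"
  unfolding regular_iff_left_finite_set
proof (rule left_finite_set_subset)
  show "(\<Union>k. lc_supp (t k)) \<subseteq> (\<Union>k<N. lc_supp (t k)) \<union> (\<Union>k. lc_supp (s k))"
  proof
    fix x assume "x \<in> (\<Union>k. lc_supp (t k))"
    then obtain k where "x \<in> lc_supp (t k)" by blast
    then show "x \<in> (\<Union>k<N. lc_supp (t k)) \<union> (\<Union>k. lc_supp (s k))"
      using assms(2)[of k] by (cases "k < N") auto
  qed
  have "left_finite_set (\<Union>k<N. lc_supp (t k))"
    by (induction N) (simp_all add: lessThan_Suc left_finite_set_Un left_finite_set_supp,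
        simp add: left_finite_set_def)
  then show "left_finite_set ((\<Union>k<N. lc_supp (t k)) \<union> (\<Union>k. lc_supp (s k)))"
    using assms(1) unfolding regular_iff_left_finite_set by (rule left_finite_set_Un)
qed


section \<open>Power series in an element of positive valuation\<close>

text \<open>If \<open>e\<close> vanishes below \<open>m > 0\<close>, then \<open>e ^ j\<close> vanishes below \<open>j * m\<close>, so the
  coefficient at \<open>t\<close> of \<open>\<Sum>j. f j * e ^ j\<close> only involves the terms with \<open>j < series_length m t\<close>.
  Truncating each coefficient there makes the formal series an element of the field.\<close>

definition series_length :: "rat \<Rightarrow> rat \<Rightarrow> nat" where
  "series_length m t = nat \<lfloor>t / m\<rfloor> + 1"

definition lc_series :: "(nat \<Rightarrow> complex) \<Rightarrow> lc \<Rightarrow> rat \<Rightarrow> lc" where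
  "lc_series f e m = Abs_lc (\<lambda>t. \<Sum>j\<le>series_length m t. f j * coeff (e ^ j) t)"

definition partial_series :: "(nat \<Rightarrow> complex) \<Rightarrow> lc \<Rightarrow> nat \<Rightarrow> lc" where
  "partial_series f e N = (\<Sum>j\<le>N. lc_const (f j) * e ^ j)"

lemma series_length_mono: "m > 0 \<Longrightarrow> s \<le> t \<Longrightarrow> series_length m s \<le> series_length m t"
  unfolding series_length_def by (simp add: divide_right_mono floor_mono nat_mono)

lemma less_of_nat_mult_if_series_length_le:
  assumes "m > 0" "series_length m t \<le> j" shows "t < of_nat j * m"
proof -
  have "t / m < of_int (\<lfloor>t / m\<rfloor> + 1)" by linarith
  also have "\<dots> \<le> of_nat j" using assms(2) unfolding series_length_def by linarith
  finally show ?thesis using assms(1) by (simp add: divide_less_eq)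
qed

lemma coeff_power_beyond_series_length:
  assumes "m > 0" "vanishes_below e m" "series_length m t \<le> j"
  shows "coeff (e ^ j) t = 0"
  using vanishes_below_power[OF assms(2), of j] less_of_nat_mult_if_series_length_le[OF assms(1,3)]
  unfolding vanishes_below_def by blast

lemma left_finite_set_series_coeffs:
  assumes "m > 0" "regular e"
  shows "left_finite_set (\<Union>k. {t. (\<Sum>j\<le>series_length m t. f j * coeff (e k ^ j) t) \<noteq> 0})"
  unfolding left_finite_set_def
proof
  fix r
  let ?S = "\<lambda>t k. \<Sum>j\<le>series_length m t. f j * coeff (e k ^ j) t"
  have "{t \<in> (\<Union>k. {t. ?S t k \<noteq> 0}). t < r} \<subseteq> (\<Union>j\<le>series_length m r. {t \<in> (\<Union>k. lc_supp (e k ^ j)). t < r})"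
  proof
    fix t assume "t \<in> {t \<in> (\<Union>k. {t. ?S t k \<noteq> 0}). t < r}"
    then obtain k where "t < r" "?S t k \<noteq> 0" by blast
    moreover from this(2) obtain j where "j \<le> series_length m t" "coeff (e k ^ j) t \<noteq> 0"
      by (rule sum.not_neutral_contains_not_neutral) auto
    moreover have "series_length m t \<le> series_length m r" using series_length_mono[OF assms(1)] calculation by simp
    ultimately show "t \<in> (\<Union>j\<le>series_length m r. {t \<in> (\<Union>k. lc_supp (e k ^ j)). t < r})"
      unfolding lc_supp_def by auto
  qed
  moreover have "finite (\<Union>j\<le>series_length m r. {t \<in> (\<Union>k. lc_supp (e k ^ j)). t < r})"
    using regular_power[OF assms(2)] unfolding regular_iff_left_finite_set left_finite_set_def by blast
  ultimately show "finite {t \<in> (\<Union>k. {t. ?S t k \<noteq> 0}). t < r}" by (rule finite_subset)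
qed

lemma coeff_lc_series:
  assumes "m > 0" shows "coeff (lc_series f e m) t = (\<Sum>j\<le>series_length m t. f j * coeff (e ^ j) t)"
proof -
  have "left_finite (\<lambda>t. \<Sum>j\<le>series_length m t. f j * coeff (e ^ j) t)"
    using left_finite_set_series_coeffs[OF assms regular_const[of e], of f] unfolding left_finite_iff_set by simp
  then show ?thesis unfolding lc_series_def by (simp add: coeff_Abs_lc)
qed

lemma regular_lc_series:
  assumes "m > 0" "regular e" shows "regular (\<lambda>k. lc_series f (e k) m)"
  using left_finite_set_series_coeffs[OF assms, of f]
  unfolding regular_iff_left_finite_set lc_supp_def by (simp add: coeff_lc_series[OF assms(1)])

lemma coeff_partial_series: "coeff (partial_series f e N) t = (\<Sum>j\<le>N. f j * coeff (e ^ j) t)"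
  unfolding partial_series_def by (simp add: coeff_sum)

lemma coeff_lc_series_eq_partial:
  assumes "m > 0" "vanishes_below e m" "series_length m t \<le> N"
  shows "coeff (lc_series f e m) t = coeff (partial_series f e N) t"
proof -
  have "(\<Sum>j\<le>series_length m t. f j * coeff (e ^ j) t) = (\<Sum>j\<le>N. f j * coeff (e ^ j) t)"
    using assms(3) coeff_power_beyond_series_length[OF assms(1,2)]
    by (intro sum.mono_neutral_left) auto
  then show ?thesis using assms(1) by (simp add: coeff_lc_series coeff_partial_series)
qed

lemma coeff_lc_series_eq_partial_below:
  assumes "m > 0" "vanishes_below e m"
  shows "\<forall>s\<le>t. coeff (lc_series f e m) s = coeff (partial_series f e (series_length m t)) s"
  using coeff_lc_series_eq_partial[OF assms] series_length_mono[OF assms(1)] by blast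

lemma vanishes_below_partial_series:
  assumes "m \<ge> 0" "vanishes_below e m" shows "vanishes_below (partial_series f e N) 0"
  unfolding partial_series_def
proof (intro vanishes_below_sum vanishes_below_const_mult)
  fix j
  show "vanishes_below (e ^ j) 0"
    by (rule vanishes_below_mono[OF vanishes_below_power[OF assms(2)]]) (simp add: assms(1))
qed

lemma vanishes_below_lc_series:
  assumes "m > 0" "vanishes_below e m" shows "vanishes_below (lc_series f e m) 0"
  unfolding vanishes_below_def
proof (intro allI impI)
  fix q :: rat assume "q < 0"
  have "coeff (lc_series f e m) q = coeff (partial_series f e (series_length m q)) q"
    by (rule coeff_lc_series_eq_partial[OF assms]) simp
  also have "\<dots> = 0"
    using vanishes_below_partial_series[of m e] assms \<open>q < 0\<close> unfolding vanishes_below_def by simp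
  finally show "coeff (lc_series f e m) q = 0" .
qed

lemma lc_cnj_lc_series:
  assumes "m > 0" "lc_cnj e = e" "\<And>j. cnj (f j) = f j"
  shows "lc_cnj (lc_series f e m) = lc_series f e m"
proof (rule lc_eqI)
  fix q
  have "cnj (coeff (e ^ j) q) = coeff (e ^ j) q" for j
    by (metis coeff_lc_cnj lc_cnj_power assms(2))
  then show "coeff (lc_cnj (lc_series f e m)) q = coeff (lc_series f e m) q"
    using assms by (simp add: coeff_lc_series)
qed

lemma lc_series_inverse:
  assumes "m > 0" "vanishes_below e m"
  shows "(1 + e) * lc_series (\<lambda>j. (-1) ^ j) e m = 1"
proof (rule lc_eqI)
  fix t
  let ?N = "series_length m t"
  have "vanishes_below (1 + e) 0"
    using assms by (intro vanishes_below_add vanishes_below_one) (auto elim: vanishes_below_mono)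
  then have "coeff ((1 + e) * lc_series (\<lambda>j. (-1) ^ j) e m) t
      = coeff ((1 + e) * partial_series (\<lambda>j. (-1) ^ j) e ?N) t"
    by (rule coeff_mult_eq_if_agree[OF _ coeff_lc_series_eq_partial_below[OF assms]])
  also have "partial_series (\<lambda>j. (-1) ^ j) e ?N = (\<Sum>j<Suc ?N. (- e) ^ j)"
    unfolding partial_series_def lessThan_Suc_atMost
    by (rule sum.cong) (simp_all add: lc_const_power lc_const_uminus power_minus[of e])
  also have "(1 + e) * (\<Sum>j<Suc ?N. (- e) ^ j) = 1 - (- e) ^ Suc ?N"
    using one_diff_power_eq[of "- e" "Suc ?N"] by simp
  also have "coeff (1 - (- e) ^ Suc ?N) t = coeff 1 t"
    using coeff_power_beyond_series_length[OF assms(1), of "- e" t "Suc ?N"] assms(2)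
    unfolding vanishes_below_def by simp
  finally show "coeff ((1 + e) * lc_series (\<lambda>j. (-1) ^ j) e m) t = coeff 1 t" .
qed


definition sqrt_series_coeff :: "nat \<Rightarrow> complex" where
  "sqrt_series_coeff j = (1/2) gchoose j"

lemma sqrt_series_coeff_convolution:
  "(\<Sum>i\<le>k. sqrt_series_coeff i * sqrt_series_coeff (k - i)) = 1 gchoose k"
  using gbinomial_Vandermonde[of "1/2 :: complex" "1/2" k]
  by (simp add: sqrt_series_coeff_def atLeast0AtMost)

lemma sum_one_gchoose_power:
  assumes "N \<ge> 1" shows "(\<Sum>k\<le>N. lc_const ((1::complex) gchoose k) * e ^ k) = 1 + e"
proof -
  have "(1::complex) gchoose k = of_nat (1 choose k)" for k
    by (simp add: binomial_gbinomial)
  then have one_gchoose: "(1::complex) gchoose k = (if k \<le> 1 then 1 else 0)" for k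
    by (cases k) (auto simp: binomial_eq_0)
  then have "(\<Sum>k\<le>N. lc_const ((1::complex) gchoose k) * e ^ k) = (\<Sum>k\<le>1. lc_const ((1::complex) gchoose k) * e ^ k)"
    using assms by (intro sum.mono_neutral_right) auto
  also have "\<dots> = 1 + e" by (simp add: one_gchoose)
  finally show ?thesis .
qed

lemma partial_sqrt_series_square:
  assumes "m \<ge> 0" "vanishes_below e m" "N \<ge> 1"
  defines "P \<equiv> partial_series sqrt_series_coeff e N"
  shows "vanishes_below (P * P - (1 + e)) (of_nat (Suc N) * m)"
proof -
  let ?c = sqrt_series_coeff
  let ?g = "\<lambda>(i, j). lc_const (?c i * ?c j) * e ^ (i + j)"
  let ?D = "{(i, j). i + j \<le> N}"
  have "P * P = (\<Sum>x\<in>{..N} \<times> {..N}. ?g x)"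
    unfolding P_def partial_series_def sum_product sum.cartesian_product
    by (rule sum.cong) (auto simp: lc_const_mult power_add algebra_simps)
  also have "\<dots> = (\<Sum>x\<in>({..N} \<times> {..N}) - ?D. ?g x) + (\<Sum>x\<in>?D. ?g x)"
    by (rule sum.subset_diff) auto
  also have "(\<Sum>x\<in>?D. ?g x) = (\<Sum>k\<le>N. \<Sum>i\<le>k. lc_const (?c i * ?c (k - i)) * e ^ (i + (k - i)))"
    by (rule sum.triangle_reindex_eq)
  also have "\<dots> = (\<Sum>k\<le>N. lc_const ((1::complex) gchoose k) * e ^ k)"
    by (simp add: sqrt_series_coeff_convolution[symmetric] lc_const_sum sum_distrib_right)
  also have "\<dots> = 1 + e" using assms(3) by (rule sum_one_gchoose_power)
  finally have "P * P - (1 + e) = (\<Sum>x\<in>({..N} \<times> {..N}) - ?D. ?g x)" by simp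
  also have "vanishes_below \<dots> (of_nat (Suc N) * m)"
  proof (rule vanishes_below_sum)
    fix x assume "x \<in> ({..N} \<times> {..N}) - ?D"
    then obtain i j where x: "x = (i, j)" "Suc N \<le> i + j" by auto
    have "vanishes_below (e ^ (i + j)) (of_nat (i + j) * m)" by (rule vanishes_below_power[OF assms(2)])
    then have "vanishes_below (e ^ (i + j)) (of_nat (Suc N) * m)"
      by (rule vanishes_below_mono) (use x(2) assms(1) in \<open>simp add: mult_right_mono\<close>)
    then show "vanishes_below (?g x) (of_nat (Suc N) * m)" using x(1) by (simp add: vanishes_below_const_mult)
  qed
  finally show ?thesis .
qed

lemma lc_series_sqrt:
  assumes "m > 0" "vanishes_below e m"
  shows "lc_series sqrt_series_coeff e m * lc_series sqrt_series_coeff e m = 1 + e"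
proof (rule lc_eqI)
  fix t
  let ?N = "series_length m t"
  let ?Y = "lc_series sqrt_series_coeff e m"
  let ?P = "partial_series sqrt_series_coeff e ?N"
  have agree: "\<forall>s\<le>t. coeff ?Y s = coeff ?P s" by (rule coeff_lc_series_eq_partial_below[OF assms])
  have "coeff (?Y * ?Y) t = coeff (?Y * ?P) t"
    by (rule coeff_mult_eq_if_agree[OF vanishes_below_lc_series[OF assms] agree])
  also have "\<dots> = coeff (?P * ?P) t"
    using coeff_mult_eq_if_agree[OF vanishes_below_partial_series[of m e] agree] assms
    by (simp add: mult.commute)
  also have "\<dots> = coeff (1 + e) t + coeff (?P * ?P - (1 + e)) t" by simp
  also have "coeff (?P * ?P - (1 + e)) t = 0"
    using partial_sqrt_series_square[of m e ?N] assms less_of_nat_mult_if_series_length_le[of m t "Suc ?N"]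
    unfolding vanishes_below_def series_length_def by simp
  finally show "coeff (?Y * ?Y) t = coeff (1 + e) t" by simp
qed


section \<open>Units, inverses and square roots\<close>

definition lc_unit_tail :: "lc \<Rightarrow> lc" where
  "lc_unit_tail x = lc_const (1 / coeff x 0) * x - 1"

lemma lc_unit_tail_eq:
  assumes "coeff x 0 \<noteq> 0" shows "x = lc_const (coeff x 0) * (1 + lc_unit_tail x)"
proof -
  have "lc_const (coeff x 0) * lc_const (1 / coeff x 0) = 1"
    using assms by (simp add: lc_const_mult[symmetric])
  then show ?thesis unfolding lc_unit_tail_def by (simp add: mult.assoc[symmetric])
qed

lemma vanishes_below_lc_unit_tail:
  assumes "vanishes_below x 0" "coeff x 0 \<noteq> 0" "\<forall>s. 0 < s \<and> s < m \<longrightarrow> coeff x s = 0"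
  shows "vanishes_below (lc_unit_tail x) m"
  unfolding vanishes_below_def lc_unit_tail_def
proof (intro allI impI)
  fix s assume "s < m"
  then consider "s < 0" | "s = 0" | "0 < s \<and> s < m" by linarith
  then show "coeff (lc_const (1 / coeff x 0) * x - 1) s = 0"
    using assms unfolding vanishes_below_def by cases (simp_all add: coeff_one)
qed

definition lc_inverse_series :: "lc \<Rightarrow> rat \<Rightarrow> lc" where
  "lc_inverse_series x m = lc_const (1 / coeff x 0) * lc_series (\<lambda>j. (-1) ^ j) (lc_unit_tail x) m"

lemma mult_lc_inverse_series:
  assumes "m > 0" "vanishes_below x 0" "coeff x 0 \<noteq> 0" "\<forall>s. 0 < s \<and> s < m \<longrightarrow> coeff x s = 0"
  shows "x * lc_inverse_series x m = 1"
proof -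
  let ?c = "coeff x 0" and ?S = "lc_series (\<lambda>j. (-1) ^ j) (lc_unit_tail x) m"
  have "x * lc_inverse_series x m = (lc_const ?c * lc_const (1 / ?c)) * ((1 + lc_unit_tail x) * ?S)"
    unfolding lc_inverse_series_def by (subst lc_unit_tail_eq[OF assms(3)]) (simp add: algebra_simps)
  also have "\<dots> = 1"
    using assms lc_series_inverse[OF assms(1) vanishes_below_lc_unit_tail[OF assms(2-4)]]
    by (simp add: lc_const_mult[symmetric])
  finally show ?thesis .
qed

lemma lc_inverse_unique:
  fixes x y :: lc assumes "x * y = 1" shows "inverse x = y"
proof -
  have "x \<noteq> 0" using assms by auto
  moreover have "(THE y. x * y = 1) = y"
  proof (rule the_equality)
    show "x * y = 1" by (rule assms)
    fix y' assume "x * y' = 1"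
    then show "y' = y" using assms by (metis mult.left_commute mult_1_right)
  qed
  ultimately show ?thesis unfolding inverse_lc_def by simp
qed

lemma lc_nonneg_iff:
  "lc_nonneg x \<longleftrightarrow> lc_cnj x = x \<and> (x = 0 \<or> (\<exists>q. coeff x q \<noteq> 0 \<and> vanishes_below x q \<and> Re (coeff x q) > 0))"
  unfolding lc_nonneg_def vanishes_below_def lc_real_iff_cnj by simp

lemma lc_nonneg_zero: "lc_nonneg 0"
  by (simp add: lc_nonneg_iff)

lemma lc_nonneg_shift:
  assumes "lc_nonneg x" shows "lc_nonneg (lc_shift a x)"
proof (cases "x = 0")
  case True
  then have "lc_shift a x = 0" by (intro lc_eqI) simp
  then show ?thesis using assms True by simp
next
  case False
  then obtain q where q: "lc_cnj x = x" "coeff x q \<noteq> 0" "vanishes_below x q" "Re (coeff x q) > 0"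
    using assms unfolding lc_nonneg_iff by blast
  have "vanishes_below (lc_shift a x) (q + a)" using q(3) unfolding vanishes_below_def by simp
  then show ?thesis unfolding lc_nonneg_iff lc_cnj_shift
    using q by (intro conjI disjI2 exI[of _ "q + a"]) simp_all
qed

lemma sqrt_one_plus_exists:
  assumes "m > 0" "vanishes_below e m" "lc_cnj e = e"
  shows "\<exists>y. y * y = 1 + e \<and> lc_cnj y = y \<and> vanishes_below y 0 \<and> coeff y 0 = 1"
proof (intro exI conjI)
  let ?y = "lc_series sqrt_series_coeff e m"
  show "?y * ?y = 1 + e" by (rule lc_series_sqrt[OF assms(1,2)])
  show "lc_cnj ?y = ?y"
    by (rule lc_cnj_lc_series[OF assms(1,3)]) (simp add: sqrt_series_coeff_def gbinomial_altdef_of_nat)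
  show "vanishes_below ?y 0" by (rule vanishes_below_lc_series[OF assms(1,2)])
  have "coeff ?y 0 = coeff (partial_series sqrt_series_coeff e 1) 0"
    by (rule coeff_lc_series_eq_partial[OF assms(1,2)]) (simp add: series_length_def)
  then show "coeff ?y 0 = 1"
    using assms(1,2) unfolding vanishes_below_def
    by (simp add: coeff_partial_series sqrt_series_coeff_def coeff_one)
qed

lemma lc_sqrt_exists_unit:
  assumes "lc_cnj x = x" "vanishes_below x 0" "Re (coeff x 0) > 0"
  shows "\<exists>y. lc_nonneg y \<and> y * y = x"
proof -
  let ?c = "coeff x 0"
  have c_cnj: "cnj ?c = ?c" using arg_cong[OF assms(1), of "\<lambda>x. coeff x 0"] by simp
  then have c_real: "of_real (Re ?c) = ?c" by (simp add: complex_eq_iff)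
  have c0: "?c \<noteq> 0" using assms(3) by auto
  obtain m where "m > 0" and gap: "\<forall>s. 0 < s \<and> s < m \<longrightarrow> coeff x s = 0"
    using left_finite_set_gap[OF left_finite_set_supp[of x]] unfolding lc_supp_def by auto
  then have tail: "vanishes_below (lc_unit_tail x) m"
    using vanishes_below_lc_unit_tail[OF assms(2) c0] by blast
  have "lc_cnj (lc_unit_tail x) = lc_unit_tail x"
    unfolding lc_unit_tail_def using assms(1) c_cnj by (simp add: lc_cnj_diff lc_cnj_mult lc_cnj_const)
  then obtain Y where Y: "Y * Y = 1 + lc_unit_tail x" "lc_cnj Y = Y" "vanishes_below Y 0" "coeff Y 0 = 1"
    using sqrt_one_plus_exists[OF \<open>m > 0\<close> tail] by blast
  define s where "s = sqrt (Re ?c)"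
  have "s > 0" "s * s = Re ?c" using assms(3) unfolding s_def by simp_all
  then have s: "s > 0" "complex_of_real s * complex_of_real s = ?c"
    using c_real by (simp_all flip: of_real_mult)
  define y where "y = lc_const (of_real s) * Y"
  have "y * y = lc_const ?c * (1 + lc_unit_tail x)"
    unfolding y_def Y(1)[symmetric] s(2)[symmetric] lc_const_mult by (simp add: algebra_simps)
  also have "\<dots> = x" using lc_unit_tail_eq[OF c0] by simp
  finally have "y * y = x" .
  moreover have "lc_nonneg y" unfolding lc_nonneg_iff
  proof (intro conjI disjI2 exI)
    show "lc_cnj y = y" unfolding y_def using Y(2) by (simp add: lc_cnj_mult lc_cnj_const)
    show "coeff y 0 \<noteq> 0" "Re (coeff y 0) > 0" unfolding y_def using Y(4) s(1) by simp_all
    show "vanishes_below y 0" unfolding y_def using Y(3) by (rule vanishes_below_const_mult)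
  qed
  ultimately show ?thesis by blast
qed


lemma lc_sqrt_exists:
  assumes "lc_nonneg x" shows "\<exists>y. lc_nonneg y \<and> y * y = x"
proof (cases "x = 0")
  case True
  then show ?thesis by (intro exI[of _ 0]) (simp add: lc_nonneg_zero)
next
  case False
  then obtain q where q: "lc_cnj x = x" "coeff x q \<noteq> 0" "vanishes_below x q" "Re (coeff x q) > 0"
    using assms unfolding lc_nonneg_iff by blast
  have "lc_cnj (lc_shift (- q) x) = lc_shift (- q) x" using q(1) by (simp add: lc_cnj_shift)
  moreover have "vanishes_below (lc_shift (- q) x) 0" using q(3) unfolding vanishes_below_def by simp
  moreover have "Re (coeff (lc_shift (- q) x) 0) > 0" using q(4) by simp
  ultimately obtain y where y: "lc_nonneg y" "y * y = lc_shift (- q) x"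
    using lc_sqrt_exists_unit by blast
  have "lc_shift (q / 2) y * lc_shift (q / 2) y = x"
    unfolding lc_shift_mult y(2) lc_shift_shift by simp
  then show ?thesis using lc_nonneg_shift[OF y(1)] by blast
qed

lemma lc_nonneg_square_eq:
  assumes "lc_nonneg y1" "lc_nonneg y2" "y1 * y1 = y2 * y2"
  shows "y1 = y2"
proof -
  have "(y1 - y2) * (y1 + y2) = 0" using assms(3) by (simp add: algebra_simps)
  then consider "y1 = y2" | "y1 = - y2" by (auto simp: eq_neg_iff_add_eq_0)
  then show ?thesis
  proof cases
    case 2
    show ?thesis
    proof (rule ccontr)
      assume "y1 \<noteq> y2"
      then have "y2 \<noteq> 0" "y1 \<noteq> 0" using 2 by auto
      then obtain a b where
        a: "coeff y2 a \<noteq> 0" "vanishes_below y2 a" "Re (coeff y2 a) > 0" and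
        b: "coeff y1 b \<noteq> 0" "vanishes_below y1 b" "Re (coeff y1 b) > 0"
        using assms(1,2) unfolding lc_nonneg_iff by blast
      have "coeff y1 a \<noteq> 0" "vanishes_below y1 a" using a 2 unfolding vanishes_below_def by auto
      then have "a = b" using b lowest_coeff_unique by blast
      then show False using a b 2 by simp
    qed
  qed
qed

lemma lc_sqrt_square:
  assumes "lc_nonneg x" shows "lc_sqrt x * lc_sqrt x = x"
proof -
  have "\<exists>!y. lc_nonneg y \<and> y * y = x"
    using lc_sqrt_exists[OF assms] lc_nonneg_square_eq by metis
  then have "lc_nonneg (lc_sqrt x) \<and> lc_sqrt x * lc_sqrt x = x"
    unfolding lc_sqrt_def by (rule theI')
  then show ?thesis ..
qed

lemma lc_nonneg_mult_cnj: "lc_nonneg (z * lc_cnj z)"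
proof (cases "z = 0")
  case False
  then obtain l where l: "coeff z l \<noteq> 0" "vanishes_below z l" using lowest_coeff_exists by blast
  have v: "vanishes_below (lc_cnj z) l" using l(2) by (rule vanishes_below_cnj)
  have "coeff (z * lc_cnj z) (l + l) = coeff z l * cnj (coeff z l)"
    using coeff_mult_lowest[OF l(2) v] by simp
  moreover have "Re (coeff z l * cnj (coeff z l)) > 0"
    using l(1) complex_eq_iff[of "coeff z l" 0] unfolding complex_mult_cnj
    by (auto simp: sum_power2_gt_zero_iff)
  ultimately show ?thesis unfolding lc_nonneg_iff using vanishes_below_mult[OF l(2) v]
    by (intro conjI disjI2 exI[of _ "l + l"]) (auto simp: lc_cnj_mult mult.commute)
qed (simp add: lc_nonneg_zero)

lemma lc_nonneg_add:
  assumes x: "lc_nonneg x" and y: "lc_nonneg y" shows "lc_nonneg (x + y)"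
proof (cases "x = 0 \<or> y = 0")
  case True then show ?thesis using x y by auto
next
  case False
  then obtain a where a: "coeff x a \<noteq> 0" "vanishes_below x a" "Re (coeff x a) > 0" and xr: "lc_cnj x = x"
    using x unfolding lc_nonneg_iff by blast
  obtain b where b: "coeff y b \<noteq> 0" "vanishes_below y b" "Re (coeff y b) > 0" and yr: "lc_cnj y = y"
    using y False unfolding lc_nonneg_iff by blast
  have "\<exists>q. coeff (x + y) q \<noteq> 0 \<and> vanishes_below (x + y) q \<and> Re (coeff (x + y) q) > 0"
  proof (cases a b rule: linorder_cases)
    case less
    then have "coeff y a = 0" "vanishes_below y a" using b(2) unfolding vanishes_below_def by auto
    then show ?thesis using a by (intro exI[of _ a]) (auto simp: vanishes_below_add)
  next
    case equal
    then have re: "Re (coeff (x + y) a) > 0" using a b by simp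
    then have "coeff (x + y) a \<noteq> 0" by (metis zero_complex.sel(1) less_irrefl)
    then show ?thesis using re a b equal by (intro exI[of _ a]) (simp add: vanishes_below_add)
  next
    case greater
    then have "coeff x b = 0" "vanishes_below x b" using a(2) unfolding vanishes_below_def by auto
    then show ?thesis using b by (intro exI[of _ b]) (auto simp: vanishes_below_add)
  qed
  then show ?thesis using xr yr unfolding lc_nonneg_iff by (simp add: lc_cnj_add)
qed

lemma lc_nonneg_sum: "(\<And>i. i \<in> I \<Longrightarrow> lc_nonneg (f i)) \<Longrightarrow> lc_nonneg (\<Sum>i\<in>I. f i)"
  by (induction I rule: infinite_finite_induct) (simp_all add: lc_nonneg_add lc_nonneg_zero)

lemma lc_norm2_square: "lc_norm2 n x * lc_norm2 n x = (\<Sum>i<n. x i * lc_cnj (x i))"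
proof -
  have "lc_abs z * lc_abs z = z * lc_cnj z" for z
    unfolding lc_abs_def by (rule lc_sqrt_square[OF lc_nonneg_mult_cnj])
  then have "lc_sum n (\<lambda>i. lc_abs (x i) * lc_abs (x i)) = (\<Sum>i<n. x i * lc_cnj (x i))"
    by (simp add: lc_sum_eq_sum)
  then show ?thesis unfolding lc_norm2_def
    by (simp add: lc_sqrt_square lc_nonneg_sum lc_nonneg_mult_cnj)
qed


section \<open>Coefficientwise and weak convergence\<close>

definition coeffwise_conv :: "(nat \<Rightarrow> lc) \<Rightarrow> lc \<Rightarrow> bool" where
  "coeffwise_conv s l \<longleftrightarrow> (\<forall>q. (\<lambda>k. coeff (s k) q) \<longlonglongrightarrow> coeff l q)"

lemma coeffwise_conv_const: "coeffwise_conv (\<lambda>k. c) c"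
  unfolding coeffwise_conv_def by simp

lemma coeffwise_conv_diff: "coeffwise_conv a \<alpha> \<Longrightarrow> coeffwise_conv b \<beta> \<Longrightarrow> coeffwise_conv (\<lambda>k. a k - b k) (\<alpha> - \<beta>)"
  unfolding coeffwise_conv_def by (simp add: tendsto_diff)

lemma coeffwise_conv_cnj: "coeffwise_conv a \<alpha> \<Longrightarrow> coeffwise_conv (\<lambda>k. lc_cnj (a k)) (lc_cnj \<alpha>)"
  unfolding coeffwise_conv_def by (simp add: tendsto_cnj)

lemma coeffwise_conv_sum:
  "(\<And>i. i \<in> I \<Longrightarrow> coeffwise_conv (f i) (g i)) \<Longrightarrow> coeffwise_conv (\<lambda>k. \<Sum>i\<in>I. f i k) (\<Sum>i\<in>I. g i)"
  unfolding coeffwise_conv_def coeff_sum by (simp add: tendsto_sum)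

lemma coeffwise_conv_lc_const_seq: "g \<longlonglongrightarrow> c \<Longrightarrow> coeffwise_conv (\<lambda>k. lc_const (g k)) (lc_const c)"
  unfolding coeffwise_conv_def by (simp add: coeff_lc_const)

lemma coeffwise_conv_eventually_eq:
  assumes "coeffwise_conv s l" "\<And>k. k \<ge> N \<Longrightarrow> t k = s k" shows "coeffwise_conv t l"
  unfolding coeffwise_conv_def
proof
  fix q
  have "\<forall>\<^sub>F k in sequentially. coeff (s k) q = coeff (t k) q"
    using assms(2) unfolding eventually_sequentially by force
  with assms(1) show "(\<lambda>k. coeff (t k) q) \<longlonglongrightarrow> coeff l q"
    unfolding coeffwise_conv_def by (blast intro: Lim_transform_eventually)
qed

text \<open>Regularity is what makes multiplication continuous: for a fixed exponent, only finitely many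
  pairs of exponents from the common supports contribute to the product coefficient.\<close>

lemma coeffwise_conv_mult:
  assumes a: "regular a" and b: "regular b" and ca: "coeffwise_conv a \<alpha>" and cb: "coeffwise_conv b \<beta>"
  shows "coeffwise_conv (\<lambda>k. a k * b k) (\<alpha> * \<beta>)"
  unfolding coeffwise_conv_def
proof
  fix q
  let ?A = "(\<Union>k. lc_supp (a k)) \<union> lc_supp \<alpha>" and ?B = "(\<Union>k. lc_supp (b k)) \<union> lc_supp \<beta>"
  have A: "left_finite_set ?A" using a left_finite_set_supp unfolding regular_iff_left_finite_set
    by (rule left_finite_set_Un)
  have "left_finite_set ?B" using b left_finite_set_supp unfolding regular_iff_left_finite_set
    by (rule left_finite_set_Un)
  then obtain bB where bB: "\<forall>p\<in>?B. bB \<le> p" using left_finite_set_bdd_below by blast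
  define F where "F = {p \<in> ?A. p < q - bB + 1}"
  have F: "finite F" using A unfolding F_def left_finite_set_def by blast
  have coeff_eq: "coeff (x * y) q = (\<Sum>p\<in>F. coeff x p * coeff y (q - p))"
    if "lc_supp x \<subseteq> ?A" "lc_supp y \<subseteq> ?B" for x y
    unfolding coeff_times
  proof (rule Sum_any.expand_superset[OF F], rule subsetI)
    fix p assume "p \<in> {p. coeff x p * coeff y (q - p) \<noteq> 0}"
    then have "p \<in> ?A" "q - p \<in> ?B" using that unfolding lc_supp_def by auto
    then show "p \<in> F" using bB unfolding F_def by force
  qed
  have "(\<lambda>k. \<Sum>p\<in>F. coeff (a k) p * coeff (b k) (q - p)) \<longlonglongrightarrow> (\<Sum>p\<in>F. coeff \<alpha> p * coeff \<beta> (q - p))"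
    using ca cb unfolding coeffwise_conv_def by (intro tendsto_sum tendsto_mult) auto
  moreover have "coeff (a k * b k) q = (\<Sum>p\<in>F. coeff (a k) p * coeff (b k) (q - p))" for k
    by (rule coeff_eq) auto
  moreover have "coeff (\<alpha> * \<beta>) q = (\<Sum>p\<in>F. coeff \<alpha> p * coeff \<beta> (q - p))"
    by (rule coeff_eq) auto
  ultimately show "(\<lambda>k. coeff (a k * b k) q) \<longlonglongrightarrow> coeff (\<alpha> * \<beta>) q" by simp
qed

lemma coeffwise_conv_power: "regular e \<Longrightarrow> coeffwise_conv e \<epsilon> \<Longrightarrow> coeffwise_conv (\<lambda>k. e k ^ j) (\<epsilon> ^ j)"
  by (induction j) (simp_all add: coeffwise_conv_const coeffwise_conv_mult regular_power)

lemma coeffwise_conv_lc_series: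
  assumes "m > 0" "regular e" "coeffwise_conv e \<epsilon>"
  shows "coeffwise_conv (\<lambda>k. lc_series f (e k) m) (lc_series f \<epsilon> m)"
  unfolding coeffwise_conv_def coeff_lc_series[OF assms(1)]
  using coeffwise_conv_power[OF assms(2,3)] unfolding coeffwise_conv_def
  by (intro allI tendsto_sum tendsto_mult tendsto_const) auto

lemma rat_less_ceiling_plus_one: "of_rat q \<le> (R::real) \<Longrightarrow> q < of_int (\<lceil>R\<rceil> + 1)"
proof -
  assume "of_rat q \<le> R"
  also have "R < of_int (\<lceil>R\<rceil> + 1)" by linarith
  finally have "(of_rat q :: real) < of_rat (of_int (\<lceil>R\<rceil> + 1))" by (simp add: of_rat_add)
  then show ?thesis by (simp only: of_rat_less)
qed

lemma coeff_le_lc_snorm: "of_rat q \<le> R \<Longrightarrow> cmod (coeff x q) \<le> lc_snorm R x"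
proof -
  let ?r = "of_int (\<lceil>R\<rceil> + 1) :: rat"
  have "{cmod (coeff x q) | q. of_rat q \<le> R} \<subseteq> insert 0 ((\<lambda>q. cmod (coeff x q)) ` {q. q < ?r \<and> coeff x q \<noteq> 0})"
    using rat_less_ceiling_plus_one by fastforce
  moreover have "finite {q. q < ?r \<and> coeff x q \<noteq> 0}" using left_finite_coeff[of x] unfolding left_finite_def by blast
  ultimately have "finite {cmod (coeff x q) | q. of_rat q \<le> R}" by (meson finite_imageI finite_insert finite_subset)
  then show "of_rat q \<le> R \<Longrightarrow> cmod (coeff x q) \<le> lc_snorm R x"
    unfolding lc_snorm_def by (intro cSup_upper bdd_above_finite) auto
qed

lemma lc_snorm_le: "(\<And>q. of_rat q \<le> R \<Longrightarrow> cmod (coeff x q) \<le> B) \<Longrightarrow> lc_snorm R x \<le> B"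
  unfolding lc_snorm_def
proof (rule cSup_least)
  have "of_rat (of_int \<lfloor>R\<rfloor>) \<le> R" by simp
  then show "{cmod (coeff x q) | q. of_rat q \<le> R} \<noteq> {}" by blast
qed blast

lemma weak_conv_imp_coeffwise_conv:
  assumes "weak_conv s l" shows "coeffwise_conv s l"
  unfolding coeffwise_conv_def
proof (intro allI LIMSEQ_I)
  fix q and \<epsilon> :: real assume "\<epsilon> > 0"
  define r where "r = min \<epsilon> (1 / (\<bar>of_rat q\<bar> + 1))"
  have pos: "(0::real) < \<bar>of_rat q\<bar> + 1" using abs_ge_zero[of "of_rat q :: real"] by linarith
  then have r: "r > 0" unfolding r_def using \<open>\<epsilon> > 0\<close> by simp
  have "r * (\<bar>of_rat q\<bar> + 1) \<le> 1"
    unfolding r_def using pos by (simp add: min_def field_simps)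
  then have "\<bar>of_rat q\<bar> + 1 \<le> 1 / r" using r by (simp add: field_simps)
  then have q: "of_rat q \<le> 1 / r" by linarith
  obtain N where N: "\<forall>k>N. lc_snorm (1 / r) (s k - l) < r" using assms r unfolding weak_conv_def by blast
  have "norm (coeff (s k) q - coeff l q) < \<epsilon>" if "k \<ge> Suc N" for k
  proof -
    have "cmod (coeff (s k - l) q) \<le> lc_snorm (1 / r) (s k - l)" by (rule coeff_le_lc_snorm[OF q])
    moreover have "lc_snorm (1 / r) (s k - l) < r" using N that by simp
    moreover have "r \<le> \<epsilon>" unfolding r_def by simp
    ultimately show ?thesis by simp
  qed
  then show "\<exists>N. \<forall>k\<ge>N. norm (coeff (s k) q - coeff l q) < \<epsilon>" by blast
qed

lemma eventually_coeffs_close: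
  assumes "coeffwise_conv s l" "finite F" "\<epsilon> > 0"
  shows "\<forall>\<^sub>F k in sequentially. \<forall>q\<in>F. cmod (coeff (s k) q - coeff l q) < \<epsilon>"
proof (rule eventually_ball_finite[OF assms(2)], rule ballI)
  fix q
  have "(\<lambda>k. coeff (s k) q) \<longlonglongrightarrow> coeff l q" using assms(1) unfolding coeffwise_conv_def by blast
  from tendsto_iff[THEN iffD1, OF this, rule_format, OF assms(3)]
  show "\<forall>\<^sub>F k in sequentially. cmod (coeff (s k) q - coeff l q) < \<epsilon>" by (simp add: dist_norm)
qed

lemma coeffwise_conv_imp_weak_conv:
  assumes reg: "regular s" and conv: "coeffwise_conv s l" shows "weak_conv s l"
  unfolding weak_conv_def
proof (intro allI impI)
  fix r :: real assume r: "r > 0"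
  let ?r = "of_int (\<lceil>1 / r\<rceil> + 1) :: rat"
  define F where "F = {q \<in> (\<Union>k. lc_supp (s k)) \<union> lc_supp l. q < ?r}"
  have F: "finite F"
    using left_finite_set_Un[OF reg[unfolded regular_iff_left_finite_set] left_finite_set_supp[of l]]
    unfolding F_def left_finite_set_def by blast
  have "\<forall>\<^sub>F k in sequentially. \<forall>q\<in>F. cmod (coeff (s k) q - coeff l q) < r / 2"
    using r by (intro eventually_coeffs_close[OF conv F]) simp
  then obtain N where N: "\<forall>k\<ge>N. \<forall>q\<in>F. cmod (coeff (s k) q - coeff l q) < r / 2"
    unfolding eventually_sequentially by blast
  have half: "lc_snorm (1 / r) (s k - l) \<le> r / 2" if "k \<ge> N" for k
  proof (rule lc_snorm_le)
    fix q assume "of_rat q \<le> 1 / r"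
    then have "q < ?r" by (rule rat_less_ceiling_plus_one)
    show "cmod (coeff (s k - l) q) \<le> r / 2"
    proof (cases "q \<in> F")
      case True
      then have "cmod (coeff (s k) q - coeff l q) < r / 2" using N that by blast
      then show ?thesis by simp
    next
      case False
      then have "coeff (s k) q = 0" "coeff l q = 0"
        using \<open>q < ?r\<close> unfolding F_def lc_supp_def by auto
      then show ?thesis using r by simp
    qed
  qed
  have "lc_snorm (1 / r) (s k - l) < r" if "k > N" for k using half[of k] that r by simp
  then show "\<exists>N0. \<forall>k>N0. lc_snorm (1 / r) (s k - l) < r" by blast
qed


lemma regular_lc_inverse_series:
  assumes "m > 0" "regular b" shows "regular (\<lambda>k. lc_inverse_series (b k) m)"
  unfolding lc_inverse_series_def lc_unit_tail_def
  by (intro regular_mult regular_lc_const_seq regular_lc_series regular_diff regular_const assms)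

lemma coeffwise_conv_lc_inverse_series:
  assumes "m > 0" "regular b" "coeffwise_conv b \<beta>" "coeff \<beta> 0 \<noteq> 0"
  shows "coeffwise_conv (\<lambda>k. lc_inverse_series (b k) m) (lc_inverse_series \<beta> m)"
proof -
  have "(\<lambda>k. 1 / coeff (b k) 0) \<longlonglongrightarrow> 1 / coeff \<beta> 0"
    using assms(3,4) unfolding coeffwise_conv_def by (intro tendsto_divide tendsto_const) auto
  then show ?thesis unfolding lc_inverse_series_def lc_unit_tail_def
    by (intro coeffwise_conv_mult coeffwise_conv_lc_const_seq coeffwise_conv_lc_series coeffwise_conv_diff
        regular_mult regular_lc_const_seq regular_lc_series regular_diff regular_const coeffwise_conv_const assms)
qed

text \<open>The inverses are computed by one power series for all \<open>k\<close> at once: regularity provides a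
  common gap \<open>(0, m)\<close> in the supports of the \<open>b k\<close> and of \<open>\<beta>\<close>.\<close>

lemma coeffwise_conv_inverse:
  assumes reg: "regular b" and conv: "coeffwise_conv b \<beta>"
    and fin: "\<And>k. vanishes_below (b k) 0" "vanishes_below \<beta> 0" and unit: "coeff \<beta> 0 \<noteq> 0"
  shows "regular (\<lambda>k. inverse (b k))" "coeffwise_conv (\<lambda>k. inverse (b k)) (inverse \<beta>)"
    and "\<beta> * inverse \<beta> = 1"
proof -
  obtain m where "m > 0" and gap: "\<forall>s. 0 < s \<and> s < m \<longrightarrow> s \<notin> (\<Union>k. lc_supp (b k)) \<union> lc_supp \<beta>"
    using left_finite_set_gap[OF left_finite_set_Un[OF reg[unfolded regular_iff_left_finite_set]
          left_finite_set_supp]] by blast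
  then have gap_b: "\<forall>s. 0 < s \<and> s < m \<longrightarrow> coeff (b k) s = 0" for k
    unfolding lc_supp_def by blast
  from gap have gap_\<beta>: "\<forall>s. 0 < s \<and> s < m \<longrightarrow> coeff \<beta> s = 0"
    unfolding lc_supp_def by blast
  have "(\<lambda>k. coeff (b k) 0) \<longlonglongrightarrow> coeff \<beta> 0" using conv unfolding coeffwise_conv_def by blast
  from tendsto_imp_eventually_ne[OF this unit]
  obtain N where N: "\<And>k. k \<ge> N \<Longrightarrow> coeff (b k) 0 \<noteq> 0"
    unfolding eventually_sequentially by blast
  have inv_b: "inverse (b k) = lc_inverse_series (b k) m" if "k \<ge> N" for k
    by (rule lc_inverse_unique, rule mult_lc_inverse_series[OF \<open>m > 0\<close> fin(1) N[OF that] gap_b])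
  have \<beta>_mult: "\<beta> * lc_inverse_series \<beta> m = 1"
    by (rule mult_lc_inverse_series[OF \<open>m > 0\<close> fin(2) unit gap_\<beta>])
  then have inv_\<beta>: "inverse \<beta> = lc_inverse_series \<beta> m" by (rule lc_inverse_unique)
  then show "\<beta> * inverse \<beta> = 1" using \<beta>_mult by simp
  show "regular (\<lambda>k. inverse (b k))"
    by (rule regular_eventually_eq[OF regular_lc_inverse_series[OF \<open>m > 0\<close> reg] inv_b])
  show "coeffwise_conv (\<lambda>k. inverse (b k)) (inverse \<beta>)" unfolding inv_\<beta>
    by (rule coeffwise_conv_eventually_eq[OF coeffwise_conv_lc_inverse_series[OF \<open>m > 0\<close> reg conv unit] inv_b])
qed

lemma weak_conv_lc_div:
  assumes "regular a" "coeffwise_conv a \<alpha>" "regular b" "coeffwise_conv b \<beta>"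
    and "\<And>k. vanishes_below (b k) 0" "vanishes_below \<beta> 0" "coeff \<beta> 0 \<noteq> 0"
  shows "weak_conv (\<lambda>k. lc_div (a k) (b k)) (\<alpha> * inverse \<beta>)"
  unfolding lc_div_def
  using assms coeffwise_conv_inverse[OF assms(3-7)]
  by (intro coeffwise_conv_imp_weak_conv regular_mult coeffwise_conv_mult) auto

lemma quad_form_eq: "quad_form n A x = (\<Sum>i<n. lc_cnj (x i) * (\<Sum>j<n. A i j * x j))"
  unfolding quad_form_def mat_vec_def by (simp add: lc_sum_eq_sum)

lemma quad_form_eigenvector:
  assumes "\<forall>i<n. mat_vec n A v i = \<nu> * v i"
  shows "quad_form n A v = \<nu> * (lc_norm2 n v * lc_norm2 n v)"
proof -
  have "quad_form n A v = (\<Sum>i<n. lc_cnj (v i) * (\<nu> * v i))"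
    using assms unfolding quad_form_def mat_vec_def by (simp add: lc_sum_eq_sum)
  then show ?thesis unfolding lc_norm2_square by (simp add: sum_distrib_left algebra_simps)
qed

lemma coeffwise_conv_quad_form_norm:
  assumes "\<forall>i<n. regular (\<lambda>k. u k i)" "\<forall>i<n. coeffwise_conv (\<lambda>k. u k i) (v i)"
  shows "regular (\<lambda>k. quad_form n A (u k))" "coeffwise_conv (\<lambda>k. quad_form n A (u k)) (quad_form n A v)"
    and "regular (\<lambda>k. lc_norm2 n (u k) * lc_norm2 n (u k))"
    and "coeffwise_conv (\<lambda>k. lc_norm2 n (u k) * lc_norm2 n (u k)) (lc_norm2 n v * lc_norm2 n v)"
  using assms unfolding quad_form_eq lc_norm2_square
  by (auto intro!: regular_sum regular_mult regular_cnj regular_const coeffwise_conv_sum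
      coeffwise_conv_mult coeffwise_conv_cnj coeffwise_conv_const)

lemma vanishes_below_norm_square:
  assumes "\<forall>i<n. at_most_finite (x i)" shows "vanishes_below (lc_norm2 n x * lc_norm2 n x) 0"
  unfolding lc_norm2_square using assms
  by (intro vanishes_below_sum)
     (metis add_0 at_most_finite_iff_vanishes_below lessThan_iff vanishes_below_cnj vanishes_below_mult)

lemma coeff_norm_square_0_nonzero:
  assumes "\<forall>i<n. at_most_finite (x i)" "coeff (lc_norm2 n x) 0 \<noteq> 0"
  shows "coeff (lc_norm2 n x * lc_norm2 n x) 0 \<noteq> 0"
  using coeff_mult_lowest[of "lc_norm2 n x" 0 "lc_norm2 n x" 0] assms
    vanishes_below_of_square[OF vanishes_below_norm_square[OF assms(1)]]
  by simp


text \<open>Diagonalizability of \<open>A\<close>, finiteness of its entries and \<open>v \<noteq> 0\<close> are not needed: \<open>A\<close> enters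
  only through the constant (hence regular) sequences of its entries, and \<open>v_norm\<close> already
  forces \<open>v \<noteq> 0\<close>.\<close>

theorem mainTheorem10:
  fixes n :: nat and A :: "nat \<Rightarrow> nat \<Rightarrow> lc" and v :: "nat \<Rightarrow> lc" and \<nu> :: lc
    and u :: "nat \<Rightarrow> nat \<Rightarrow> lc"
  assumes diag: "diagonalizable n A"
    and A_fin: "\<forall>i<n. \<forall>j<n. at_most_finite (A i j)"
    and v_fin: "\<forall>i<n. at_most_finite (v i)"
    and v_nz: "\<exists>i<n. v i \<noteq> 0"
    and eig: "\<forall>i<n. mat_vec n A v i = \<nu> * v i"
    and v_norm: "Re (coeff (lc_norm2 n v) 0) > 0"
    and u_fin: "\<forall>k. \<forall>i<n. at_most_finite (u k i)"
    and u_reg: "\<forall>i<n. regular (\<lambda>k. u k i)"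
    and u_conv: "\<forall>i<n. weak_conv (\<lambda>k. u k i) (v i)"
  shows "weak_conv (\<lambda>k. lc_div (quad_form n A (u k)) (lc_norm2 n (u k) * lc_norm2 n (u k))) \<nu>"
proof -
  let ?N = "\<lambda>x. lc_norm2 n x * lc_norm2 n x"
  have conv: "\<forall>i<n. coeffwise_conv (\<lambda>k. u k i) (v i)"
    using u_conv weak_conv_imp_coeffwise_conv by blast
  have "coeff (lc_norm2 n v) 0 \<noteq> 0" using v_norm by (metis zero_complex.sel(1) less_irrefl)
  then have N_v: "vanishes_below (?N v) 0" "coeff (?N v) 0 \<noteq> 0"
    using v_fin by (simp_all add: vanishes_below_norm_square coeff_norm_square_0_nonzero)
  have N_u: "vanishes_below (?N (u k)) 0" for k
    using u_fin by (simp add: vanishes_below_norm_square)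
  note seqs = coeffwise_conv_quad_form_norm[OF u_reg conv]
  have "weak_conv (\<lambda>k. lc_div (quad_form n A (u k)) (?N (u k))) (quad_form n A v * inverse (?N v))"
    by (rule weak_conv_lc_div[OF seqs N_u N_v])
  moreover have "quad_form n A v * inverse (?N v) = \<nu>"
    using quad_form_eigenvector[OF eig] coeffwise_conv_inverse(3)[OF seqs(3,4) N_u N_v] by (simp add: mult.assoc)
  ultimately show ?thesis by simp
qed

end
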